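(* Let $r,t,\ell,m$ be integers with $1 \le t \le \ell \le m$ and $1 \le r \le \ell$. Then $$\mathfrak{w}_r(t;\ell,m) = \frac{q-1}{q}\sum_{s=1}^r q^{\binom{s}{2}}\left(\frac{[m]_q!}{[m-t]_q!} - (-1)^s \frac{[m-s]_q!}{[m-t]_q!} \right)q^{s(\ell-r)}q^{\binom{t-s}{2}}{r\brack s}_q {\ell-r\brack t-s}_q$$ $$=\frac{q-1}{q}\left(\mu_t(\ell,m) -\sum_{s=0}^r (-1)^s q^{\binom{s}{2}} \frac{[m-s]_q!}{[m-t]_q!}\,q^{s(\ell-r)}\,q^{\binom{t-s}{2}}{r\brack s}_q {\ell-r\brack t-s}_q\right),$$ where terms with $s>t$ vanish because the Gaussian binomial ${\ell-r\brack t-s}_q$ is then $0$.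
   Context: $q$ is a prime power. $\mu_t(\ell,m)$ is the number of $\ell\times m$ matrices over $\mathbb{F}_q$ of rank exactly $t$. For an $\ell\times m$ matrix $M=(m_{ij})$, $\tau_r(M)=m_{11}+\cdots+m_{rr}$, and $\mathfrak w_r(t;\ell,m)$ is the number of $\ell\times m$ matrices $M$ over $\mathbb{F}_q$ with $\mathrm{rk}(M)=t$ and $\tau_r(M)\ne 0$. The Gaussian factorial is $[n]_q!=\prod_{i=1}^n(q^i-1)$ (with $[0]_q!=1$), and ${n\brack k}_q$ is the Gaussian binomial coefficient, equal to $0$ if $k<0$ or $k>n$. *)

theory Defs
  imports Complex_Main "Jordan_Normal_Form.DL_Rank"
begin

text \<open>Matrices over the finite field 'a (q = CARD('a)) are JNF matrices;
  rank is the JNF rank (dimension of the column space).\<close>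

definition mat_rank :: "'a::field mat \<Rightarrow> nat" where
  "mat_rank A = vec_space.rank (dim_row A) A"

definition mu :: "'a::{finite,field} itself \<Rightarrow> nat \<Rightarrow> nat \<Rightarrow> nat \<Rightarrow> nat" where
  "mu _ t l m = card {A :: 'a mat. A \<in> carrier_mat l m \<and> mat_rank A = t}"

text \<open>tau_r(M) = m_11 + ... + m_rr (0-indexed here).\<close>
definition tau :: "nat \<Rightarrow> 'a::field mat \<Rightarrow> 'a" where
  "tau r A = (\<Sum>i<r. A $$ (i, i))"

definition wcount :: "'a::{finite,field} itself \<Rightarrow> nat \<Rightarrow> nat \<Rightarrow> nat \<Rightarrow> nat \<Rightarrow> nat" where
  "wcount _ r t l m =
     card {A :: 'a mat. A \<in> carrier_mat l m \<and> mat_rank A = t \<and> tau r A \<noteq> 0}"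

definition gfact :: "real \<Rightarrow> nat \<Rightarrow> real" where
  "gfact q n = (\<Prod>i=1..n. q ^ i - 1)"

definition gbinom :: "real \<Rightarrow> int \<Rightarrow> int \<Rightarrow> real" where
  "gbinom q n k = (if 0 \<le> k \<and> k \<le> n
     then gfact q (nat n) / (gfact q (nat k) * gfact q (nat (n - k))) else 0)"

end

theory Submission
  imports Defs "HOL-Library.Cardinality"
begin

text \<open>Write \<open>N(a)\<close> (\<open>tau_count\<close>) for the number of \<open>l \<times> m\<close> matrices of rank \<open>t\<close>
  with \<open>\<tau>\<^sub>r = a\<close>. Scaling by nonzero constants gives \<open>N(a) = N(1)\<close> for every \<open>a \<noteq> 0\<close>, hence
  \<open>w = (q - 1) N(1)\<close> and \<open>\<mu> = N(0) + (q - 1) N(1)\<close>, i.e. \<open>w = (q - 1) / q * (\<mu> - D)\<close> with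
  \<open>D = N(0) - N(1)\<close> (\<open>tau_excess\<close>).

  Ranks are computed by counting: the image of \<open>A\<close> has \<open>q ^ rank A\<close> elements, so adjoining a
  column keeps the rank exactly when the column lies in that image. Splitting off the first row
  and column yields \<open>D\<^sub>r\<^sub>+\<^sub>1(t; l+1, m+1) = q ^ t * D\<^sub>r(t; l, m) - q ^ (t-1) * D\<^sub>r(t-1; l, m)\<close>:
  when the rest of the first row is nonzero, translating the first column by image vectors
  equidistributes \<open>\<tau>\<close>. The closed form for \<open>D\<close> satisfies the same recursion and reduces to the
  classical count of rank \<open>t\<close> matrices at \<open>r = 0\<close>; the two expressions of the theorem differ by
  the \<open>q\<close>-Vandermonde identity.\<close>

lemma carrier_vec_Suc: "carrier_vec (Suc n) = (\<lambda>(a, v). vCons a v) ` (UNIV \<times> carrier_vec n)"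
proof -
  have "x \<in> (\<lambda>(a, v). vCons a v) ` (UNIV \<times> carrier_vec n)"
    if "x \<in> carrier_vec (Suc n)" for x :: "'a vec"
    using that by (cases x) auto
  then show ?thesis
    by auto
qed

lemma carrier_vec_0: "carrier_vec 0 = {0\<^sub>v 0}"
  unfolding carrier_vec_def by auto

lemma card_carrier_vec: "card (carrier_vec n :: 'a::{finite,zero} vec set) = CARD('a) ^ n"
proof (induction n)
  case 0
  then show ?case
    by (simp add: carrier_vec_0)
next
  case (Suc n)
  have "inj_on (\<lambda>(a, v). vCons a v) (UNIV \<times> (carrier_vec n :: 'a vec set))"
    by (rule inj_onI) auto
  then show ?case
    unfolding carrier_vec_Suc by (simp add: card_image card_cartesian_product Suc)
qed

lemma finite_carrier_vec [simp]: "finite (carrier_vec n :: 'a::{finite,zero} vec set)"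
  by (rule card_ge_0_finite) (simp add: card_carrier_vec)

lemma card_carrier_vec_head:
  "card {c \<in> carrier_vec (Suc n). c $ 0 = (b :: 'a::{finite,zero})} = CARD('a) ^ n"
proof -
  have "{c \<in> carrier_vec (Suc n). c $ 0 = b} = vCons b ` carrier_vec n"
    unfolding carrier_vec_Suc by auto
  moreover have "inj_on (vCons b) (carrier_vec n :: 'a vec set)"
    by (rule inj_onI) auto
  ultimately show ?thesis
    by (simp add: card_image card_carrier_vec)
qed

lemma finite_carrier_mat [simp]: "finite (carrier_mat l k :: 'a::finite mat set)"
proof -
  let ?I = "{0..<l} \<times> {0..<k}"
  have "carrier_mat l k \<subseteq> (\<lambda>f. mat l k f) ` (?I \<rightarrow>\<^sub>E (UNIV :: 'a set))"
  proof
    fix A :: "'a mat" assume A: "A \<in> carrier_mat l k"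
    then have "A = mat l k (restrict (\<lambda>ij. A $$ ij) ?I)"
      by (intro eq_matI) auto
    then show "A \<in> (\<lambda>f. mat l k f) ` (?I \<rightarrow>\<^sub>E UNIV)"
      by (intro image_eqI[where x = "restrict (\<lambda>ij. A $$ ij) ?I"]) auto
  qed
  then show ?thesis
    by (rule finite_subset) (simp add: finite_PiE)
qed

lemma one_less_card_field: "1 < CARD('a::{finite,field})"
proof -
  have "card {0::'a, 1} \<le> CARD('a)"
    by (rule card_mono) auto
  then show ?thesis
    by simp
qed

lemma sum_if_const_eq_card:
  "finite C \<Longrightarrow> (\<Sum>R\<in>C. if P R then (x :: 'a::semiring_1) else 0) = of_nat (card {R \<in> C. P R}) * x"
  by (simp add: sum.inter_filter[symmetric])

lemma card_filter_mem_eq_sum_card: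
  assumes "finite S" "finite B"
  shows "card {x \<in> S. f x \<in> B} = (\<Sum>b\<in>B. card {x \<in> S. f x = b})"
proof -
  have "{x \<in> S. f x \<in> B} = (\<Union>b\<in>B. {x \<in> S. f x = b})"
    by auto
  then show ?thesis
    using assms by (simp add: card_UN_disjoint disjoint_iff)
qed

section \<open>Rank as the size of the image\<close>

lemma (in vectorspace) card_carrier_eq_power_dim:
  assumes "fin_dim"
  shows "card (carrier V) = card (carrier K) ^ dim"
proof -
  obtain \<beta> where \<beta>: "finite \<beta>" "basis \<beta>"
    using finite_basis_exists[OF assms] by blast
  have \<beta>V: "\<beta> \<subseteq> carrier V"
    using \<beta>(2) unfolding basis_def by auto
  have unique: "\<exists>!a. a \<in> \<beta> \<rightarrow>\<^sub>E carrier K \<and> lincomb a \<beta> = v" if "v \<in> carrier V" for v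
    using basis_criterion[OF \<beta>(1) \<beta>V] \<beta>(2) that by auto
  have "bij_betw (\<lambda>a. lincomb a \<beta>) (\<beta> \<rightarrow>\<^sub>E carrier K) (carrier V)"
  proof (rule bij_betwI')
    fix a b assume a: "a \<in> \<beta> \<rightarrow>\<^sub>E carrier K" and b: "b \<in> \<beta> \<rightarrow>\<^sub>E carrier K"
    have "lincomb a \<beta> \<in> carrier V"
      using lincomb_closed[OF \<beta>V] a by auto
    then show "(lincomb a \<beta> = lincomb b \<beta>) = (a = b)"
      using unique a b by metis
  next
    show "lincomb a \<beta> \<in> carrier V" if "a \<in> \<beta> \<rightarrow>\<^sub>E carrier K" for a
      using lincomb_closed[OF \<beta>V] that by auto
  next
    show "\<exists>a\<in>\<beta> \<rightarrow>\<^sub>E carrier K. v = lincomb a \<beta>" if "v \<in> carrier V" for v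
      using unique[OF that] by metis
  qed
  then have "card (carrier V) = card (\<beta> \<rightarrow>\<^sub>E carrier K)"
    by (simp add: bij_betw_same_card)
  then show ?thesis
    using \<beta>(1) by (simp add: card_PiE dim_basis[OF \<beta>])
qed

definition mat_image :: "'a::semiring_0 mat \<Rightarrow> 'a vec set" where
  "mat_image A = (\<lambda>x. A *\<^sub>v x) ` carrier_vec (dim_col A)"

lemma card_mat_image:
  fixes A :: "'a::{finite,field} mat"
  assumes A: "A \<in> carrier_mat n k"
  shows "card (mat_image A) = CARD('a) ^ mat_rank A"
proof -
  interpret V: vec_space "TYPE('a)" n .
  let ?W = "V.span_vs (set (cols A))"
  have "set (cols A) \<subseteq> carrier_vec n"
    using A unfolding cols_def by auto
  then have "vectorspace class_ring ?W"
    using V.span_is_subspace subspace_def V.subspace_is_vs by simp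
  then have "card (V.span (set (cols A))) = CARD('a) ^ V.rank A"
    using vectorspace.card_carrier_eq_power_dim V.fin_dim_span_cols[OF A]
    unfolding V.rank_def by (fastforce simp: class_ring_simps)
  moreover have "V.span (set (cols A)) = mat_image A"
    using V.col_space_eq[OF A] A unfolding V.col_space_def mat_image_def by auto
  ultimately show ?thesis
    using A by (simp add: mat_rank_def)
qed

lemma mat_rank_eqI_card_mat_image:
  fixes A :: "'a::{finite,field} mat"
  assumes "A \<in> carrier_mat n k" and "card (mat_image A) = CARD('a) ^ j"
  shows "mat_rank A = j"
  using assms card_mat_image power_inject_exp one_less_card_field by metis

lemma mat_image_subset_carrier: "A \<in> carrier_mat n k \<Longrightarrow> mat_image A \<subseteq> carrier_vec n"
  unfolding mat_image_def by auto

lemma mat_image_add: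
  "A \<in> carrier_mat n k \<Longrightarrow> x \<in> mat_image A \<Longrightarrow> y \<in> mat_image A \<Longrightarrow> x + y \<in> mat_image A"
  unfolding mat_image_def by (force simp: mult_add_distrib_mat_vec[symmetric])

lemma mat_image_smult:
  "A \<in> carrier_mat n k \<Longrightarrow> (x :: 'a::field vec) \<in> mat_image A \<Longrightarrow> a \<cdot>\<^sub>v x \<in> mat_image A"
  unfolding mat_image_def by (force simp: mult_mat_vec[symmetric])

lemma mat_image_diff:
  fixes A :: "'a::field mat"
  assumes A: "A \<in> carrier_mat n k" and x: "x \<in> mat_image A" and y: "y \<in> mat_image A"
  shows "x - y \<in> mat_image A"
proof -
  have "x + (-1) \<cdot>\<^sub>v y \<in> mat_image A"
    using mat_image_add[OF A x mat_image_smult[OF A y]] .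
  moreover have "x + (-1) \<cdot>\<^sub>v y = x - y"
    using mat_image_subset_carrier[OF A] x y by (intro eq_vecI) auto
  ultimately show ?thesis
    by simp
qed

definition cons_col :: "'a vec \<Rightarrow> 'a mat \<Rightarrow> 'a mat" where
  "cons_col c R =
     mat (dim_row R) (Suc (dim_col R)) (\<lambda>(i, j). if j = 0 then c $ i else R $$ (i, j - 1))"

lemma dim_cons_col [simp]:
  "dim_row (cons_col c R) = dim_row R" "dim_col (cons_col c R) = Suc (dim_col R)"
  unfolding cons_col_def by auto

lemma cons_col_carrier [simp]: "R \<in> carrier_mat l k \<Longrightarrow> cons_col c R \<in> carrier_mat l (Suc k)"
  unfolding cons_col_def by auto

lemma mult_cons_col_vCons:
  fixes R :: "'a::field mat"
  assumes R: "R \<in> carrier_mat l k" and c: "c \<in> carrier_vec l" and y: "y \<in> carrier_vec k"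
  shows "cons_col c R *\<^sub>v vCons a y = a \<cdot>\<^sub>v c + R *\<^sub>v y"
proof (rule eq_vecI)
  fix i assume "i < dim_vec (a \<cdot>\<^sub>v c + R *\<^sub>v y)"
  then have i: "i < l"
    using R by simp
  have "(cons_col c R *\<^sub>v vCons a y) $ i = (\<Sum>j<Suc k. cons_col c R $$ (i, j) * vCons a y $ j)"
    using i R y unfolding cons_col_def by (simp add: scalar_prod_def row_def atLeast0LessThan)
  also have "\<dots> = c $ i * a + (\<Sum>j<k. R $$ (i, j) * y $ j)"
    unfolding sum.lessThan_Suc_shift using i R y by (simp add: cons_col_def)
  also have "\<dots> = (a \<cdot>\<^sub>v c + R *\<^sub>v y) $ i"
    using i R y c by (simp add: scalar_prod_def row_def atLeast0LessThan mult.commute)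
  finally show "(cons_col c R *\<^sub>v vCons a y) $ i = (a \<cdot>\<^sub>v c + R *\<^sub>v y) $ i" .
qed (use R c in auto)

lemma mat_image_cons_col:
  fixes R :: "'a::field mat"
  assumes R: "R \<in> carrier_mat l k" and c: "c \<in> carrier_vec l"
  shows "mat_image (cons_col c R) = (\<lambda>(a, y). a \<cdot>\<^sub>v c + y) ` (UNIV \<times> mat_image R)"
proof -
  have "mat_image (cons_col c R) = (\<lambda>x. cons_col c R *\<^sub>v x) ` carrier_vec (Suc k)"
    unfolding mat_image_def using R by simp
  also have "\<dots> = (\<lambda>(a, v). a \<cdot>\<^sub>v c + R *\<^sub>v v) ` (UNIV \<times> carrier_vec k)"
    unfolding carrier_vec_Suc image_image using mult_cons_col_vCons[OF R c]
    by (intro image_cong) auto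
  also have "\<dots> = (\<lambda>(a, y). a \<cdot>\<^sub>v c + y) ` (UNIV \<times> mat_image R)"
    unfolding mat_image_def using R by auto
  finally show ?thesis .
qed

lemma inj_on_smult_add_mat_image:
  fixes R :: "'a::field mat"
  assumes R: "R \<in> carrier_mat l k" and c: "c \<in> carrier_vec l" "c \<notin> mat_image R"
  shows "inj_on (\<lambda>(a, y). a \<cdot>\<^sub>v c + y) (UNIV \<times> mat_image R)"
proof (rule inj_onI, clarsimp)
  fix a b :: 'a and y z
  assume y: "y \<in> mat_image R" and z: "z \<in> mat_image R" and e: "a \<cdot>\<^sub>v c + y = b \<cdot>\<^sub>v c + z"
  have yc: "y \<in> carrier_vec l" and zc: "z \<in> carrier_vec l"
    using y z mat_image_subset_carrier[OF R] by auto
  have entry: "a * c $ i + y $ i = b * c $ i + z $ i" if "i < l" for i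
    using arg_cong[OF e, of "\<lambda>v. v $ i"] that c yc zc by simp
  have ab: "a = b"
  proof (rule ccontr)
    assume ab: "a \<noteq> b"
    have "c $ i = ((1 / (a - b)) \<cdot>\<^sub>v (z - y)) $ i" if "i < l" for i
    proof -
      have "(a - b) * c $ i = z $ i - y $ i"
        using entry[OF that] by (simp add: algebra_simps)
      then show ?thesis
        using that yc zc ab by (simp add: field_simps)
    qed
    then have "c = (1 / (a - b)) \<cdot>\<^sub>v (z - y)"
      using c yc zc by (intro eq_vecI) auto
    moreover have "(1 / (a - b)) \<cdot>\<^sub>v (z - y) \<in> mat_image R"
      using mat_image_smult[OF R mat_image_diff[OF R z y]] .
    ultimately show False
      using c by simp
  qed
  moreover have "y = z"
  proof (rule eq_vecI)
    show "y $ i = z $ i" if "i < dim_vec z" for i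
      using that zc entry[of i] ab by simp
  qed (use yc zc in auto)
  ultimately show "a = b \<and> y = z"
    by simp
qed

lemma mat_rank_cons_col:
  fixes R :: "'a::{finite,field} mat"
  assumes R: "R \<in> carrier_mat l k" and c: "c \<in> carrier_vec l"
  shows "mat_rank (cons_col c R) = (if c \<in> mat_image R then mat_rank R else Suc (mat_rank R))"
proof -
  have W: "mat_image R \<subseteq> carrier_vec l"
    using mat_image_subset_carrier[OF R] .
  show ?thesis
  proof (cases "c \<in> mat_image R")
    case True
    have "mat_image (cons_col c R) = mat_image R"
    proof
      show "mat_image (cons_col c R) \<subseteq> mat_image R"
        unfolding mat_image_cons_col[OF R c]
        using mat_image_add[OF R] mat_image_smult[OF R True] by auto
      show "mat_image R \<subseteq> mat_image (cons_col c R)"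
      proof
        fix y assume y: "y \<in> mat_image R"
        then have "y = 0 \<cdot>\<^sub>v c + y"
          using W c by (intro eq_vecI) auto
        then show "y \<in> mat_image (cons_col c R)"
          unfolding mat_image_cons_col[OF R c] using y by (intro image_eqI[of _ _ "(0, y)"]) auto
      qed
    qed
    then show ?thesis
      using True card_mat_image[OF R] mat_rank_eqI_card_mat_image[OF cons_col_carrier[OF R]] by simp
  next
    case False
    then have "inj_on (\<lambda>(a, y). a \<cdot>\<^sub>v c + y) (UNIV \<times> mat_image R)"
      by (rule inj_on_smult_add_mat_image[OF R c])
    then have "card (mat_image (cons_col c R)) = CARD('a) ^ Suc (mat_rank R)"
      unfolding mat_image_cons_col[OF R c]
      by (simp add: card_image card_cartesian_product card_mat_image[OF R])
    then show ?thesis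
      using False mat_rank_eqI_card_mat_image[OF cons_col_carrier[OF R]] by simp
  qed
qed

definition cons_zero_row :: "'a::zero mat \<Rightarrow> 'a mat" where
  "cons_zero_row R =
     mat (Suc (dim_row R)) (dim_col R) (\<lambda>(i, j). if i = 0 then 0 else R $$ (i - 1, j))"

lemma dim_cons_zero_row [simp]:
  "dim_row (cons_zero_row R) = Suc (dim_row R)" "dim_col (cons_zero_row R) = dim_col R"
  unfolding cons_zero_row_def by auto

lemma cons_zero_row_carrier [simp]: "R \<in> carrier_mat l k \<Longrightarrow> cons_zero_row R \<in> carrier_mat (Suc l) k"
  unfolding cons_zero_row_def by auto

lemma mat_image_cons_zero_row:
  fixes R :: "'a::field mat"
  assumes R: "R \<in> carrier_mat l k"
  shows "mat_image (cons_zero_row R) = vCons 0 ` mat_image R"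
proof -
  have "cons_zero_row R *\<^sub>v x = vCons 0 (R *\<^sub>v x)" if x: "x \<in> carrier_vec k" for x
  proof (rule eq_vecI)
    fix i assume "i < dim_vec (vCons 0 (R *\<^sub>v x))"
    then show "(cons_zero_row R *\<^sub>v x) $ i = vCons 0 (R *\<^sub>v x) $ i"
      using R x by (cases i) (auto simp: cons_zero_row_def scalar_prod_def row_def)
  qed (use R in auto)
  then show ?thesis
    unfolding mat_image_def using R by (auto simp: image_image)
qed

lemma mat_rank_cons_zero_row:
  fixes R :: "'a::{finite,field} mat"
  assumes R: "R \<in> carrier_mat l k"
  shows "mat_rank (cons_zero_row R) = mat_rank R"
proof -
  have "card (mat_image (cons_zero_row R)) = card (mat_image R)"
    unfolding mat_image_cons_zero_row[OF R] by (rule card_image) (auto intro: inj_onI)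
  then show ?thesis
    using mat_rank_eqI_card_mat_image[OF cons_zero_row_carrier[OF R]] card_mat_image[OF R] by simp
qed

lemma mat_rank_smult:
  fixes A :: "'a::{finite,field} mat"
  assumes A: "A \<in> carrier_mat l k" and a: "a \<noteq> 0"
  shows "mat_rank (a \<cdot>\<^sub>m A) = mat_rank A"
proof -
  have mult: "(a \<cdot>\<^sub>m A) *\<^sub>v x = A *\<^sub>v (a \<cdot>\<^sub>v x)" if "x \<in> carrier_vec k" for x
    using A that by (intro eq_vecI) (auto simp: scalar_prod_def row_def sum_distrib_left ac_simps)
  have "mat_image (a \<cdot>\<^sub>m A) = mat_image A"
  proof
    show "mat_image (a \<cdot>\<^sub>m A) \<subseteq> mat_image A"
      unfolding mat_image_def using A mult by auto
    show "mat_image A \<subseteq> mat_image (a \<cdot>\<^sub>m A)"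
    proof
      fix y assume "y \<in> mat_image A"
      then obtain x where x: "x \<in> carrier_vec k" "y = A *\<^sub>v x"
        unfolding mat_image_def using A by auto
      have "x = a \<cdot>\<^sub>v ((1 / a) \<cdot>\<^sub>v x)"
        using x a by (intro eq_vecI) auto
      then have "y = (a \<cdot>\<^sub>m A) *\<^sub>v ((1 / a) \<cdot>\<^sub>v x)"
        using x mult[of "(1 / a) \<cdot>\<^sub>v x"] by simp
      then show "y \<in> mat_image (a \<cdot>\<^sub>m A)"
        unfolding mat_image_def using A x by auto
    qed
  qed
  then show ?thesis
    using mat_rank_eqI_card_mat_image[of "a \<cdot>\<^sub>m A" l k] card_mat_image[OF A] A by simp
qed

lemma cons_col_inj:
  assumes R: "R \<in> carrier_mat l k" "R' \<in> carrier_mat l k"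
    and c: "c \<in> carrier_vec l" "c' \<in> carrier_vec l"
    and eq: "cons_col c R = cons_col c' R'"
  shows "c = c' \<and> R = R'"
proof
  have entry: "cons_col c R $$ (i, j) = cons_col c' R' $$ (i, j)" for i j
    using eq by simp
  show "c = c'"
  proof (rule eq_vecI)
    show "c $ i = c' $ i" if "i < dim_vec c'" for i
      using entry[of i 0] that R c by (simp add: cons_col_def)
  qed (use c in auto)
  show "R = R'"
  proof (rule eq_matI)
    show "R $$ (i, j) = R' $$ (i, j)" if "i < dim_row R'" "j < dim_col R'" for i j
      using entry[of i "Suc j"] that R by (simp add: cons_col_def)
  qed (use R in auto)
qed

lemma card_carrier_mat_Suc_col:
  fixes P :: "'a::{finite,zero} mat \<Rightarrow> bool"
  shows "card {A \<in> carrier_mat l (Suc k). P A} =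
    (\<Sum>R\<in>carrier_mat l k. card {c \<in> carrier_vec l. P (cons_col c R)})"
proof -
  let ?S = "SIGMA R:carrier_mat l k. {c \<in> carrier_vec l. P (cons_col c R)}"
  have "{A \<in> carrier_mat l (Suc k). P A} \<subseteq> (\<lambda>(R, c). cons_col c R) ` ?S"
  proof
    fix A assume A: "A \<in> {A \<in> carrier_mat l (Suc k). P A}"
    let ?R = "mat l k (\<lambda>(i, j). A $$ (i, Suc j))"
    have "A = cons_col (col A 0) ?R"
      using A by (intro eq_matI) (auto simp: cons_col_def)
    then show "A \<in> (\<lambda>(R, c). cons_col c R) ` ?S"
      using A by (intro image_eqI[of _ _ "(?R, col A 0)"]) auto
  qed
  moreover have "(\<lambda>(R, c). cons_col c R) ` ?S \<subseteq> {A \<in> carrier_mat l (Suc k). P A}"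
    by auto
  ultimately have "{A \<in> carrier_mat l (Suc k). P A} = (\<lambda>(R, c). cons_col c R) ` ?S"
    by (rule subset_antisym)
  moreover have "inj_on (\<lambda>(R, c). cons_col c R) ?S"
  proof (rule inj_onI)
    fix x y assume "x \<in> ?S" "y \<in> ?S" "(\<lambda>(R, c). cons_col c R) x = (\<lambda>(R, c). cons_col c R) y"
    then show "x = y"
      using cons_col_inj[of "fst x" l k "fst y" "snd x" "snd y"] by (cases x, cases y) auto
  qed
  ultimately have "card {A \<in> carrier_mat l (Suc k). P A} = card ?S"
    by (simp add: card_image)
  then show ?thesis
    by simp
qed

lemma card_cons_col_rank:
  fixes R :: "'a::{finite,field} mat"
  assumes R: "R \<in> carrier_mat l k"
  shows "real (card {c \<in> carrier_vec l. mat_rank (cons_col c R) = t}) =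
    (if mat_rank R = t then real CARD('a) ^ t else 0) +
    (if Suc (mat_rank R) = t then real CARD('a) ^ l - real CARD('a) ^ mat_rank R else 0)"
proof -
  have W: "mat_image R \<subseteq> carrier_vec l"
    using mat_image_subset_carrier[OF R] .
  have rk: "mat_rank (cons_col c R) = (if c \<in> mat_image R then mat_rank R else Suc (mat_rank R))"
    if "c \<in> carrier_vec l" for c
    using mat_rank_cons_col[OF R that] .
  consider "mat_rank R = t" | "Suc (mat_rank R) = t" | "mat_rank R \<noteq> t" "Suc (mat_rank R) \<noteq> t"
    by blast
  then show ?thesis
  proof cases
    case 1
    then have "{c \<in> carrier_vec l. mat_rank (cons_col c R) = t} = mat_image R"
      using rk W by (auto split: if_splits)
    then show ?thesis
      using 1 card_mat_image[OF R] by simp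
  next
    case 2
    then have "{c \<in> carrier_vec l. mat_rank (cons_col c R) = t} = carrier_vec l - mat_image R"
      using rk W by (auto split: if_splits)
    moreover have "card (carrier_vec l - mat_image R) = CARD('a) ^ l - CARD('a) ^ mat_rank R"
      using card_Diff_subset[OF _ W] card_mat_image[OF R]
      by (simp add: card_carrier_vec finite_subset[OF W])
    moreover have "CARD('a) ^ mat_rank R \<le> CARD('a) ^ l"
      using card_mono[OF _ W] card_mat_image[OF R] by (simp add: card_carrier_vec)
    ultimately show ?thesis
      using 2 by simp
  next
    case 3
    then have "{c \<in> carrier_vec l. mat_rank (cons_col c R) = t} = {}"
      using rk by auto
    then show ?thesis
      using 3 by simp
  qed
qed

lemma mu_Suc:
  "real (mu TYPE('a::{finite,field}) t l (Suc k)) =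
     real CARD('a) ^ t * real (mu TYPE('a) t l k) +
     (if t = 0 then 0
      else (real CARD('a) ^ l - real CARD('a) ^ (t - 1)) * real (mu TYPE('a) (t - 1) l k))"
proof -
  let ?q = "real CARD('a)"
  let ?C = "carrier_mat l k :: 'a mat set"
  have mu: "mu TYPE('a) t' l k' = card {A \<in> (carrier_mat l k' :: 'a mat set). mat_rank A = t'}"
    for t' k'
    unfolding mu_def by simp
  have "real (mu TYPE('a) t l (Suc k)) =
      (\<Sum>R\<in>?C. real (card {c \<in> carrier_vec l. mat_rank (cons_col c R) = t}))"
    unfolding mu card_carrier_mat_Suc_col by simp
  also have "\<dots> = (\<Sum>R\<in>?C. (if mat_rank R = t then ?q ^ t else 0) +
      (if mat_rank R = t - 1 \<and> t \<noteq> 0 then ?q ^ l - ?q ^ (t - 1) else 0))"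
    by (rule sum.cong) (auto simp: card_cons_col_rank)
  also have "\<dots> = real (card {R \<in> ?C. mat_rank R = t}) * ?q ^ t +
      real (card {R \<in> ?C. mat_rank R = t - 1 \<and> t \<noteq> 0}) * (?q ^ l - ?q ^ (t - 1))"
    unfolding sum.distrib by (simp add: sum_if_const_eq_card)
  also have "\<dots> = ?q ^ t * real (mu TYPE('a) t l k) +
     (if t = 0 then 0 else (?q ^ l - ?q ^ (t - 1)) * real (mu TYPE('a) (t - 1) l k))"
    unfolding mu by (cases t) (simp_all add: mult.commute)
  finally show ?thesis .
qed

lemma mu_0: "mu TYPE('a::{finite,field}) t l 0 = (if t = 0 then 1 else 0)"
proof -
  let ?Z = "0\<^sub>m l 0 :: 'a mat"
  have "mat_rank ?Z = 0"
    unfolding mat_rank_def using vec_space.rank_0I[of l 0] by simp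
  moreover have "carrier_mat l 0 = {?Z}"
    by auto
  ultimately have "{A \<in> carrier_mat l 0. mat_rank A = t} = (if t = 0 then {?Z} else {})"
    by auto
  then show ?thesis
    unfolding mu_def by simp
qed

section \<open>Counting by the value of the trace\<close>

definition tau_count :: "'a::{finite,field} itself \<Rightarrow> nat \<Rightarrow> nat \<Rightarrow> nat \<Rightarrow> nat \<Rightarrow> 'a \<Rightarrow> nat" where
  "tau_count _ r t l m a = card {A \<in> (carrier_mat l m :: 'a mat set). mat_rank A = t \<and> tau r A = a}"

definition tau_excess :: "'a::{finite,field} itself \<Rightarrow> nat \<Rightarrow> nat \<Rightarrow> nat \<Rightarrow> nat \<Rightarrow> real" where
  "tau_excess T r t l m = real (tau_count T r t l m 0) - real (tau_count T r t l m 1)"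

lemma tau_excess_0: "tau_excess TYPE('a::{finite,field}) 0 t l m = real (mu TYPE('a) t l m)"
  unfolding tau_excess_def tau_count_def mu_def tau_def by simp


lemma tau_count_le:
  assumes "r \<le> l" "r \<le> m" "b \<noteq> 0" "c \<noteq> 0"
  shows "tau_count TYPE('a::{finite,field}) r t l m b \<le> tau_count TYPE('a) r t l m c"
proof -
  let ?A = "{A \<in> (carrier_mat l m :: 'a mat set). mat_rank A = t \<and> tau r A = b}"
  let ?B = "{A \<in> (carrier_mat l m :: 'a mat set). mat_rank A = t \<and> tau r A = c}"
  let ?f = "\<lambda>A. (c / b) \<cdot>\<^sub>m A"
  have cb: "c / b \<noteq> 0"
    using assms by simp
  have "inj_on ?f ?A"
  proof (rule inj_onI)
    fix A B assume A: "A \<in> ?A" and B: "B \<in> ?A" and eq: "?f A = ?f B"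
    show "A = B"
    proof (rule eq_matI)
      fix i j assume "i < dim_row B" "j < dim_col B"
      moreover have "A \<in> carrier_mat l m" "B \<in> carrier_mat l m"
        using A B by auto
      ultimately have "(c / b) * A $$ (i, j) = (c / b) * B $$ (i, j)"
        using arg_cong[OF eq, of "\<lambda>X. X $$ (i, j)"] by simp
      then show "A $$ (i, j) = B $$ (i, j)"
        using cb by simp
    qed (use A B in auto)
  qed
  moreover have "?f ` ?A \<subseteq> ?B"
  proof
    fix X assume "X \<in> ?f ` ?A"
    then obtain A where A: "A \<in> ?A" and X: "X = ?f A"
      by blast
    have "tau r X = (c / b) * tau r A"
      unfolding X tau_def sum_distrib_left using A assms by (auto intro!: sum.cong)
    then show "X \<in> ?B"
      using A X assms mat_rank_smult[OF _ cb, of A l m] by simp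
  qed
  ultimately show ?thesis
    unfolding tau_count_def by (simp add: card_inj_on_le)
qed

lemma tau_count_eq_tau_count_1:
  assumes "r \<le> l" "r \<le> m" "a \<noteq> 0"
  shows "tau_count TYPE('a::{finite,field}) r t l m a = tau_count TYPE('a) r t l m 1"
  using tau_count_le[OF assms(1,2) assms(3), of 1 t] tau_count_le[OF assms(1,2) _ assms(3), of 1 t]
  by simp

lemma wcount_eq_tau_excess:
  assumes "r \<le> l" "r \<le> m"
  shows "real (wcount TYPE('a::{finite,field}) r t l m) =
    (real CARD('a) - 1) / real CARD('a) * (real (mu TYPE('a) t l m) - tau_excess TYPE('a) r t l m)"
proof -
  let ?S = "{A \<in> (carrier_mat l m :: 'a mat set). mat_rank A = t}"
  let ?N = "tau_count TYPE('a) r t l m"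
  have fibres: "card {A \<in> ?S. tau r A \<in> B} = (\<Sum>b\<in>B. ?N b)" for B
    unfolding tau_count_def by (subst card_filter_mem_eq_sum_card) auto
  have "(\<Sum>b\<in>UNIV - {0}. ?N b) = (\<Sum>b\<in>UNIV - {0::'a}. ?N 1)"
    by (intro sum.cong refl tau_count_eq_tau_count_1[OF assms]) simp
  then have nonzero: "(\<Sum>b\<in>UNIV - {0}. ?N b) = (CARD('a) - 1) * ?N 1"
    by (simp add: card_Diff_singleton)
  have "wcount TYPE('a) r t l m = card {A \<in> ?S. tau r A \<in> UNIV - {0}}"
    unfolding wcount_def by (rule arg_cong[where f = card]) auto
  then have w: "wcount TYPE('a) r t l m = (CARD('a) - 1) * ?N 1"
    unfolding fibres nonzero .
  have "mu TYPE('a) t l m = card {A \<in> ?S. tau r A \<in> UNIV}"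
    unfolding mu_def by simp
  also have "\<dots> = ?N 0 + (\<Sum>b\<in>UNIV - {0}. ?N b)"
    unfolding fibres by (rule sum.remove) auto
  finally have mu: "mu TYPE('a) t l m = ?N 0 + (CARD('a) - 1) * ?N 1"
    unfolding nonzero .
  have "real (CARD('a) - 1) = real CARD('a) - 1"
    using one_less_card_field[where 'a = 'a] by simp
  then show ?thesis
    unfolding w mu tau_excess_def
    using one_less_card_field[where 'a = 'a] by (simp add: field_simps)
qed

lemma tau_cons_col:
  assumes "r \<le> l" "r \<le> k" "R \<in> carrier_mat (Suc l) k" "c \<in> carrier_vec (Suc l)"
  shows "tau (Suc r) (cons_col c R) = c $ 0 + (\<Sum>i<r. R $$ (Suc i, i))"
  unfolding tau_def sum.lessThan_Suc_shift using assms by (auto simp: cons_col_def intro!: sum.cong)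

lemma tau_cons_zero_row:
  assumes "r \<le> l" "r \<le> k" "R \<in> carrier_mat l k"
  shows "(\<Sum>i<r. cons_zero_row R $$ (Suc i, i)) = tau r R"
  unfolding tau_def using assms by (auto simp: cons_zero_row_def intro!: sum.cong)

lemma cons_zero_row_inj_on: "inj_on cons_zero_row (carrier_mat l k :: 'a::zero mat set)"
proof (rule inj_onI)
  fix R R' :: "'a mat"
  assume R: "R \<in> carrier_mat l k" "R' \<in> carrier_mat l k" and eq: "cons_zero_row R = cons_zero_row R'"
  show "R = R'"
  proof (rule eq_matI)
    show "R $$ (i, j) = R' $$ (i, j)" if "i < dim_row R'" "j < dim_col R'" for i j
      using arg_cong[OF eq, of "\<lambda>X. X $$ (Suc i, j)"] R that by (simp add: cons_zero_row_def)
  qed (use R in auto)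
qed

lemma sum_carrier_mat_Suc_zero_row:
  assumes "\<And>R. R \<in> carrier_mat (Suc l) k \<Longrightarrow> \<exists>j<k. R $$ (0, j) \<noteq> 0 \<Longrightarrow> g R = 0"
  shows "(\<Sum>R\<in>carrier_mat (Suc l) k. g R)
    = (\<Sum>R\<in>carrier_mat l k. g (cons_zero_row (R :: 'a::{finite,zero} mat)))"
proof -
  let ?Z = "{R \<in> carrier_mat (Suc l) k. \<forall>j<k. R $$ (0, j) = (0 :: 'a)}"
  have "?Z \<subseteq> cons_zero_row ` carrier_mat l k"
  proof
    fix R assume R: "R \<in> ?Z"
    let ?R' = "mat l k (\<lambda>(i, j). R $$ (Suc i, j))"
    have "R = cons_zero_row ?R'"
      using R by (intro eq_matI) (auto simp: cons_zero_row_def)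
    then show "R \<in> cons_zero_row ` carrier_mat l k"
      by (rule image_eqI) simp
  qed
  moreover have "cons_zero_row ` carrier_mat l k \<subseteq> ?Z"
    by (auto simp: cons_zero_row_def)
  ultimately have Z: "?Z = cons_zero_row ` carrier_mat l k"
    by (rule subset_antisym)
  have "(\<Sum>R\<in>carrier_mat (Suc l) k. g R) = (\<Sum>R\<in>?Z. g R)"
    using assms by (intro sum.mono_neutral_right) auto
  also have "\<dots> = (\<Sum>R\<in>carrier_mat l k. g (cons_zero_row R))"
    unfolding Z using cons_zero_row_inj_on by (rule sum.reindex_cong) auto
  finally show ?thesis .
qed

text \<open>If the first row of \<open>R\<close> is nonzero, translating the new column by a suitable vector of the
  image of \<open>R\<close> preserves the rank and shifts its first entry arbitrarily.\<close>

lemma card_cons_col_first_entry_le: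
  fixes R :: "'a::{finite,field} mat"
  assumes R: "R \<in> carrier_mat (Suc l) k" and j: "j < k" "R $$ (0, j) \<noteq> 0"
  shows "card {c \<in> carrier_vec (Suc l). mat_rank (cons_col c R) = t \<and> c $ 0 + x = a}
       \<le> card {c \<in> carrier_vec (Suc l). mat_rank (cons_col c R) = t \<and> c $ 0 + x = b}"
proof -
  define w where "w = R *\<^sub>v unit_vec k j"
  have w: "w \<in> mat_image R" "w \<in> carrier_vec (Suc l)" "w $ 0 = R $$ (0, j)"
    unfolding w_def mat_image_def using R j by (auto simp: row_def)
  define v where "v = ((b - a) / w $ 0) \<cdot>\<^sub>v w"
  have v: "v \<in> mat_image R" "v \<in> carrier_vec (Suc l)" "v $ 0 = b - a"
    unfolding v_def using mat_image_smult[OF R w(1)] w j by auto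
  let ?A = "{c \<in> carrier_vec (Suc l). mat_rank (cons_col c R) = t \<and> c $ 0 + x = a}"
  let ?B = "{c \<in> carrier_vec (Suc l). mat_rank (cons_col c R) = t \<and> c $ 0 + x = b}"
  have "inj_on (\<lambda>c. c + v) ?A"
  proof (rule inj_onI)
    fix c d assume c: "c \<in> ?A" and d: "d \<in> ?A" and eq: "c + v = d + v"
    show "c = d"
    proof (rule eq_vecI)
      show "c $ i = d $ i" if "i < dim_vec d" for i
        using arg_cong[OF eq, of "\<lambda>u. u $ i"] that c d v(2) by auto
    qed (use c d in auto)
  qed
  moreover have "(\<lambda>c. c + v) ` ?A \<subseteq> ?B"
  proof
    fix y assume "y \<in> (\<lambda>c. c + v) ` ?A"
    then obtain c where c: "c \<in> ?A" and y: "y = c + v"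
      by blast
    have cC: "c \<in> carrier_vec (Suc l)" and yC: "y \<in> carrier_vec (Suc l)"
      using c y v(2) by auto
    have "y - v = c"
      unfolding y using cC v(2) by (intro eq_vecI) auto
    then have "c \<in> mat_image R \<longleftrightarrow> y \<in> mat_image R"
      unfolding y using mat_image_add[OF R _ v(1)] mat_image_diff[OF R _ v(1)] by metis
    then have "mat_rank (cons_col y R) = t"
      using c mat_rank_cons_col[OF R cC] mat_rank_cons_col[OF R yC] by simp
    moreover have "y $ 0 + x = b"
    proof -
      have "y $ 0 + x = (c $ 0 + x) + v $ 0"
        unfolding y using cC v(2) by (simp add: algebra_simps)
      moreover have "c $ 0 + x = a"
        using c by blast
      ultimately show ?thesis
        using v(3) by simp
    qed
    ultimately show "y \<in> ?B"
      using yC by blast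
  qed
  ultimately show ?thesis
    by (simp add: card_inj_on_le)
qed

lemma card_cons_col_zero_row:
  fixes R :: "'a::{finite,field} mat"
  assumes R: "R \<in> carrier_mat l k"
  shows "real (card {c \<in> carrier_vec (Suc l).
      mat_rank (cons_col c (cons_zero_row R)) = t \<and> c $ 0 + x = a}) =
    (if mat_rank R = t \<and> x = a then real CARD('a) ^ t else 0) +
    (if Suc (mat_rank R) = t
     then real CARD('a) ^ l - (if x = a then real CARD('a) ^ (t - 1) else 0) else 0)"
proof -
  let ?R = "cons_zero_row R"
  let ?S = "{c \<in> carrier_vec (Suc l). mat_rank (cons_col c ?R) = t \<and> c $ 0 + x = a}"
  have RR: "?R \<in> carrier_mat (Suc l) k"
    using R by simp
  have W: "mat_image ?R \<subseteq> carrier_vec (Suc l)"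
    using mat_image_subset_carrier[OF RR] .
  have card_W: "card (mat_image ?R) = CARD('a) ^ mat_rank R"
    using card_mat_image[OF RR] mat_rank_cons_zero_row[OF R] by simp
  have head: "c $ 0 = 0" if "c \<in> mat_image ?R" for c
    using that mat_image_cons_zero_row[OF R] by auto
  have rk: "mat_rank (cons_col c ?R) = (if c \<in> mat_image ?R then mat_rank R else Suc (mat_rank R))"
    if "c \<in> carrier_vec (Suc l)" for c
    using mat_rank_cons_col[OF RR that] mat_rank_cons_zero_row[OF R] by simp
  consider "mat_rank R = t" | "Suc (mat_rank R) = t" | "mat_rank R \<noteq> t" "Suc (mat_rank R) \<noteq> t"
    by blast
  then show ?thesis
  proof cases
    case 1
    then have "?S = (if x = a then mat_image ?R else {})"
      using rk W head by (auto split: if_splits)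
    then show ?thesis
      using 1 card_W by simp
  next
    case 2
    let ?V = "{c \<in> carrier_vec (Suc l). c $ 0 = a - x}"
    have S: "?S = ?V - mat_image ?R"
      using rk W 2 by (auto split: if_splits simp: algebra_simps)
    have VW: "?V \<inter> mat_image ?R = (if x = a then mat_image ?R else {})"
      using W head by auto
    have "card ?S = card ?V - card (?V \<inter> mat_image ?R)"
      unfolding S by (rule card_Diff_subset_Int) (use finite_subset[OF W] in auto)
    moreover have "card (?V \<inter> mat_image ?R) \<le> card ?V"
      by (rule card_mono) auto
    ultimately have "real (card ?S) = real (card ?V) - real (card (?V \<inter> mat_image ?R))"
      by simp
    then show ?thesis
      using 2 card_carrier_vec_head[of l "a - x"] VW card_W by auto
  next
    case 3
    then have "?S = {}"
      using rk by (auto split: if_splits)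
    then show ?thesis
      using 3 by simp
  qed
qed

text \<open>Split off the first row and column; only blocks \<open>R\<close> with vanishing first row contribute.\<close>

lemma tau_excess_Suc:
  assumes rl: "r \<le> l" and rk: "r \<le> k"
  shows "tau_excess TYPE('a::{finite,field}) (Suc r) t (Suc l) (Suc k) =
    real CARD('a) ^ t * tau_excess TYPE('a) r t l k -
    (if t = 0 then 0 else real CARD('a) ^ (t - 1) * tau_excess TYPE('a) r (t - 1) l k)"
proof -
  let ?q = "real CARD('a)"
  let ?C = "carrier_mat l k :: 'a mat set"
  define S where "S a R = {c \<in> carrier_vec (Suc l).
      mat_rank (cons_col c R) = t \<and> c $ 0 + (\<Sum>i<r. R $$ (Suc i, i)) = a}" for a and R :: "'a mat"
  define g where "g R = real (card (S 0 R)) - real (card (S 1 R))" for R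
  have "tau_count TYPE('a) (Suc r) t (Suc l) (Suc k) a = (\<Sum>R\<in>carrier_mat (Suc l) k. card (S a R))"
    for a
    unfolding tau_count_def card_carrier_mat_Suc_col S_def
    using tau_cons_col[OF rl rk] by (intro sum.cong refl arg_cong[where f = card]) auto
  then have "tau_excess TYPE('a) (Suc r) t (Suc l) (Suc k) = (\<Sum>R\<in>carrier_mat (Suc l) k. g R)"
    unfolding tau_excess_def g_def by (simp add: sum_subtractf)
  also have "\<dots> = (\<Sum>R\<in>?C. g (cons_zero_row R))"
  proof (rule sum_carrier_mat_Suc_zero_row)
    fix R :: "'a mat" assume R: "R \<in> carrier_mat (Suc l) k" and "\<exists>j<k. R $$ (0, j) \<noteq> 0"
    then obtain j where j: "j < k" "R $$ (0, j) \<noteq> 0"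
      by blast
    show "g R = 0"
      using card_cons_col_first_entry_le[OF R j, of t] unfolding g_def S_def
      by (simp add: antisym)
  qed
  also have "\<dots> = (\<Sum>R\<in>?C.
      (if mat_rank R = t \<and> tau r R = 0 then ?q ^ t else 0)
    - (if mat_rank R = t \<and> tau r R = 1 then ?q ^ t else 0)
    - (if mat_rank R = t - 1 \<and> t \<noteq> 0 \<and> tau r R = 0 then ?q ^ (t - 1) else 0)
    + (if mat_rank R = t - 1 \<and> t \<noteq> 0 \<and> tau r R = 1 then ?q ^ (t - 1) else 0))"
    (is "_ = sum ?h ?C")
  proof (rule sum.cong[OF refl])
    show "g (cons_zero_row R) = ?h R" if R: "R \<in> ?C" for R
      unfolding g_def S_def tau_cons_zero_row[OF rl rk R] card_cons_col_zero_row[OF R] by auto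
  qed
  also have "\<dots> = real (card {R \<in> ?C. mat_rank R = t \<and> tau r R = 0}) * ?q ^ t
      - real (card {R \<in> ?C. mat_rank R = t \<and> tau r R = 1}) * ?q ^ t
      - real (card {R \<in> ?C. mat_rank R = t - 1 \<and> t \<noteq> 0 \<and> tau r R = 0}) * ?q ^ (t - 1)
      + real (card {R \<in> ?C. mat_rank R = t - 1 \<and> t \<noteq> 0 \<and> tau r R = 1}) * ?q ^ (t - 1)"
    unfolding sum.distrib sum_subtractf by (simp add: sum_if_const_eq_card)
  also have "\<dots> = ?q ^ t * tau_excess TYPE('a) r t l k -
    (if t = 0 then 0 else ?q ^ (t - 1) * tau_excess TYPE('a) r (t - 1) l k)"
    unfolding tau_excess_def tau_count_def by (cases t) (simp_all add: algebra_simps)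
  finally show ?thesis .
qed

section \<open>Gaussian binomial coefficients\<close>

lemma gfact_0 [simp]: "gfact q 0 = 1"
  unfolding gfact_def by simp

lemma gfact_Suc: "gfact q (Suc n) = gfact q n * (q ^ Suc n - 1)"
  unfolding gfact_def by (simp add: prod.nat_ivl_Suc')

lemma gfact_pos: "1 < q \<Longrightarrow> 0 < gfact q n"
  unfolding gfact_def by (intro prod_pos) auto

lemma gfact_Suc_diff:
  "k < n \<Longrightarrow> gfact q (n - k) = gfact q (n - Suc k) * (q ^ (n - k) - 1)"
  using gfact_Suc[of q "n - Suc k"] by (simp add: Suc_diff_Suc)

abbreviation qbinom :: "real \<Rightarrow> nat \<Rightarrow> nat \<Rightarrow> real" where
  "qbinom q n k \<equiv> gbinom q (int n) (int k)"

lemma qbinom_def: "qbinom q n k = (if k \<le> n then gfact q n / (gfact q k * gfact q (n - k)) else 0)"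
  unfolding gbinom_def by (auto simp: nat_diff_distrib)

lemma gbinom_eq_0 [simp]: "k < 0 \<or> n < k \<Longrightarrow> gbinom q n k = 0"
  unfolding gbinom_def by auto

lemma gbinom_0 [simp]: "1 < q \<Longrightarrow> 0 \<le> n \<Longrightarrow> gbinom q n 0 = 1"
  unfolding gbinom_def using gfact_pos[of q "nat n"] by simp

lemma gbinom_same [simp]: "1 < q \<Longrightarrow> 0 \<le> n \<Longrightarrow> gbinom q n n = 1"
  unfolding gbinom_def using gfact_pos[of q "nat n"] by simp

text \<open>After clearing the Gaussian factorials, the two identities below become rational identities
  in two powers \<open>X\<close>, \<open>Y\<close> of \<open>q\<close>; they are proved with the powers and factorials kept opaque,
  since unfolding them derails the field simplifier.\<close>

lemma qbinom_Suc_Suc: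
  assumes q: "1 < q"
  shows "qbinom q (Suc n) (Suc k) = qbinom q n k + q ^ Suc k * qbinom q n (Suc k)"
proof (cases "Suc k \<le> n")
  case True
  define d where "d = n - Suc k"
  have n: "n = k + Suc d"
    using True unfolding d_def by simp
  have identity: "G * (X * Y - 1) / ((a * (X - 1)) * (b * (Y - 1)))
      = G / (a * (b * (Y - 1))) + X * (G / ((a * (X - 1)) * b))"
    if "0 < a" "0 < b" "1 < X" "1 < Y" for G a b X Y :: real
  proof -
    have "G / (a * (b * (Y - 1))) + X * (G / ((a * (X - 1)) * b))
        = (G * (X - 1) + X * G * (Y - 1)) / ((a * (X - 1)) * (b * (Y - 1)))"
      using that by (simp add: add_divide_distrib diff_divide_distrib)
    also have "G * (X - 1) + X * G * (Y - 1) = G * (X * Y - 1)"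
      by (simp add: algebra_simps)
    finally show ?thesis
      by simp
  qed
  have "q ^ Suc n = q ^ Suc k * q ^ Suc d"
    using n by (simp add: power_add[symmetric])
  moreover have "qbinom q (Suc n) (Suc k) = gfact q (Suc n) / (gfact q (Suc k) * gfact q (Suc d))"
    "qbinom q n k = gfact q n / (gfact q k * gfact q (Suc d))"
    "qbinom q n (Suc k) = gfact q n / (gfact q (Suc k) * gfact q d)"
    unfolding qbinom_def using n by simp_all
  ultimately show ?thesis
    unfolding gfact_Suc[of q n] gfact_Suc[of q k] gfact_Suc[of q d]
    by (simp only:) (rule identity; use gfact_pos[OF q] one_less_power[OF q] in blast)
next
  case False
  then show ?thesis
    using q by (cases "n = k") auto
qed

lemma qbinom_Suc_ratio:
  assumes q: "1 < q"
  shows "(q ^ Suc t - 1) * qbinom q l (Suc t) * q ^ t = (q ^ l - q ^ t) * qbinom q l t"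
proof (cases "Suc t \<le> l")
  case True
  define d where "d = l - Suc t"
  have l: "l = t + Suc d"
    using True unfolding d_def by simp
  have identity: "(X - 1) * (G / ((a * (X - 1)) * b)) * T = (T * Y - T) * (G / (a * (b * (Y - 1))))"
    if "0 < a" "0 < b" "1 < X" "1 < Y" for G a b X Y T :: real
    using that by (simp add: field_simps)
  have "q ^ l = q ^ t * q ^ Suc d"
    using l by (simp add: power_add[symmetric])
  moreover have "qbinom q l (Suc t) = gfact q l / (gfact q (Suc t) * gfact q d)"
    "qbinom q l t = gfact q l / (gfact q t * gfact q (Suc d))"
    unfolding qbinom_def using l by simp_all
  ultimately show ?thesis
    unfolding gfact_Suc[of q t] gfact_Suc[of q d]
    by (simp only:) (rule identity; use gfact_pos[OF q] one_less_power[OF q] in blast)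
next
  case False
  then show ?thesis
    using q by (cases "l = t") auto
qed

lemma zero_choose_two [simp]: "0 choose 2 = 0"
  by (simp add: binomial_eq_0)

lemma Suc_choose_two: "Suc k choose 2 = k + (k choose 2)"
  by (simp add: numeral_2_eq_2)

definition qvandermonde_term :: "real \<Rightarrow> nat \<Rightarrow> nat \<Rightarrow> nat \<Rightarrow> nat \<Rightarrow> real" where
  "qvandermonde_term q s r t n = q ^ (s choose 2) * q ^ (s * n) * q ^ ((t - s) choose 2)
     * qbinom q r s * gbinom q (int n) (int t - int s)"

lemma qvandermonde_term_eq_0: "t < s \<or> r + n < t \<Longrightarrow> qvandermonde_term q s r t n = 0"
  unfolding qvandermonde_term_def by (cases "s \<le> r") auto

lemma qvandermonde_term_zero_t: "1 < q \<Longrightarrow> qvandermonde_term q s r 0 n = (if s = 0 then 1 else 0)"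
  unfolding qvandermonde_term_def by auto

lemma qvandermonde_term_zero_n:
  "1 < q \<Longrightarrow> qvandermonde_term q s r t 0 = (if s = t then q ^ (t choose 2) * qbinom q r t else 0)"
  unfolding qvandermonde_term_def by (cases s t rule: linorder_cases) auto

lemma qvandermonde_term_Suc_Suc:
  assumes q: "1 < q"
  shows "qvandermonde_term q s r (Suc t) (Suc n)
    = q ^ Suc t * qvandermonde_term q s r (Suc t) n + q ^ t * qvandermonde_term q s r t n"
proof -
  consider "Suc t < s" | "s = Suc t" | "s \<le> t"
    by linarith
  then show ?thesis
  proof cases
    case 1
    then show ?thesis
      by (simp add: qvandermonde_term_eq_0)
  next
    case 2
    then show ?thesis
      using q by (simp add: qvandermonde_term_def qvandermonde_term_eq_0 power_add algebra_simps)
  next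
    case 3
    define k where "k = t - s"
    have t: "t = s + k"
      using 3 unfolding k_def by simp
    have diff: "int (Suc t) - int s = int (Suc k)" "int t - int s = int k"
      "Suc t - s = Suc k" "t - s = k"
      using t by auto
    show ?thesis
      unfolding qvandermonde_term_def diff qbinom_Suc_Suc[OF q, of n k] Suc_choose_two unfolding t
      by (simp add: power_add algebra_simps)
  qed
qed

lemma q_vandermonde:
  assumes q: "1 < q"
  shows "(\<Sum>s=0..r. qvandermonde_term q s r t n) = q ^ (t choose 2) * qbinom q (r + n) t"
proof (induction n arbitrary: t)
  case 0
  show ?case
    using q by (simp add: qvandermonde_term_zero_n[OF q] sum.If_cases)
next
  case (Suc n)
  show ?case
  proof (cases t)
    case 0
    then show ?thesis
      using q by (simp add: qvandermonde_term_zero_t[OF q])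
  next
    case (Suc u)
    have "(\<Sum>s=0..r. qvandermonde_term q s r t (Suc n))
        = q ^ Suc u * (\<Sum>s=0..r. qvandermonde_term q s r (Suc u) n)
          + q ^ u * (\<Sum>s=0..r. qvandermonde_term q s r u n)"
      unfolding Suc qvandermonde_term_Suc_Suc[OF q] by (simp add: sum.distrib sum_distrib_left)
    also have "\<dots> = q ^ (t choose 2) * qbinom q (r + Suc n) t"
      unfolding Suc.IH Suc using qbinom_Suc_Suc[OF q, of "r + n" u]
      by (simp add: Suc_choose_two power_add algebra_simps)
    finally show ?thesis .
  qed
qed

section \<open>The closed forms\<close>

definition mu_formula :: "real \<Rightarrow> nat \<Rightarrow> nat \<Rightarrow> nat \<Rightarrow> real" where
  "mu_formula q t l m = (\<Prod>i<t. q ^ m - q ^ i) * qbinom q l t"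

lemma mu_formula_0: "1 < q \<Longrightarrow> mu_formula q t l 0 = (if t = 0 then 1 else 0)"
proof (cases t)
  case (Suc u)
  then have "(\<Prod>i<t. q ^ 0 - q ^ i) = 0"
    by (intro prod_zero bexI[of _ 0]) auto
  then show ?thesis
    unfolding mu_formula_def using Suc by simp
qed (simp add: mu_formula_def)

lemma mu_formula_Suc:
  assumes q: "1 < q"
  shows "mu_formula q t l (Suc k) = q ^ t * mu_formula q t l k +
    (if t = 0 then 0 else (q ^ l - q ^ (t - 1)) * mu_formula q (t - 1) l k)"
proof (cases t)
  case 0
  then show ?thesis
    unfolding mu_formula_def using q by simp
next
  case (Suc u)
  define P where "P = (\<Prod>i<u. q ^ k - q ^ i)"
  have "(\<Prod>i<u. q ^ Suc k - q ^ Suc i) = q ^ u * P"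
    unfolding P_def power_Suc right_diff_distrib[symmetric] by (simp add: prod.distrib)
  then have "(\<Prod>i<Suc u. q ^ Suc k - q ^ i) = (q ^ Suc k - 1) * q ^ u * P"
    unfolding prod.lessThan_Suc_shift by simp
  then have "mu_formula q t l (Suc k) = (q ^ Suc k - 1) * q ^ u * P * qbinom q l (Suc u)"
    unfolding mu_formula_def Suc by simp
  also have "\<dots> = q ^ Suc u * (P * (q ^ k - q ^ u) * qbinom q l (Suc u))
      + P * ((q ^ Suc u - 1) * qbinom q l (Suc u) * q ^ u)"
    by (simp add: algebra_simps)
  also have "\<dots> = q ^ t * mu_formula q t l k + (q ^ l - q ^ (t - 1)) * mu_formula q (t - 1) l k"
    unfolding mu_formula_def Suc qbinom_Suc_ratio[OF q] P_def by (simp add: algebra_simps)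
  finally show ?thesis
    using Suc by simp
qed

lemma prod_power_diff_gfact:
  assumes "t \<le> m"
  shows "(\<Prod>i<t. q ^ m - q ^ i) * gfact q (m - t) = q ^ (t choose 2) * gfact q m"
  using assms
proof (induction t)
  case 0
  then show ?case
    by simp
next
  case (Suc t)
  have "q ^ m - q ^ t = q ^ t * (q ^ (m - t) - 1)"
    using Suc.prems by (simp add: algebra_simps power_add[symmetric])
  then have "(\<Prod>i<Suc t. q ^ m - q ^ i) * gfact q (m - Suc t)
      = q ^ t * ((\<Prod>i<t. q ^ m - q ^ i) * gfact q (m - t))"
    using Suc.prems by (simp add: gfact_Suc_diff algebra_simps)
  also have "\<dots> = q ^ (Suc t choose 2) * gfact q m"
    using Suc by (simp add: Suc_choose_two power_add)
  finally show ?case .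
qed

lemma mu_formula_gfact:
  assumes q: "1 < q" and "l \<le> m"
  shows "mu_formula q t l m = gfact q m / gfact q (m - t) * q ^ (t choose 2) * qbinom q l t"
proof (cases "t \<le> l")
  case True
  then show ?thesis
    unfolding mu_formula_def using assms prod_power_diff_gfact[of t m q] gfact_pos[OF q, of "m - t"]
    by (simp add: field_simps)
qed (simp add: mu_formula_def)

definition excess_formula :: "real \<Rightarrow> nat \<Rightarrow> nat \<Rightarrow> nat \<Rightarrow> nat \<Rightarrow> real" where
  "excess_formula q r t l m = (\<Sum>s=0..r. (-1) ^ s * q ^ (s choose 2)
     * (gfact q (m - s) / gfact q (m - t)) * q ^ (s * (l - r)) * q ^ ((t - s) choose 2)
     * qbinom q r s * gbinom q (int l - int r) (int t - int s))"

lemma excess_formula_qvandermonde: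
  assumes "r \<le> l"
  shows "excess_formula q r t l m
    = (\<Sum>s=0..r. (-1) ^ s * gfact q (m - s) * qvandermonde_term q s r t (l - r)) / gfact q (m - t)"
  unfolding excess_formula_def qvandermonde_term_def sum_divide_distrib
  using assms by (intro sum.cong) auto

lemma excess_formula_0:
  assumes "1 < q" "l \<le> m"
  shows "excess_formula q 0 t l m = mu_formula q t l m"
  unfolding excess_formula_def mu_formula_gfact[OF assms] using assms by simp

lemma excess_formula_Suc_row:
  assumes q: "1 < q" and "r \<le> l" "Suc l \<le> m"
  shows "excess_formula q r t (Suc l) m = q ^ t * excess_formula q r t l m +
    (if t = 0 then 0 else (q ^ m - q ^ (t - 1)) * excess_formula q r (t - 1) l m)"
proof -
  define n where "n = l - r"
  define A where "A t' n' = (\<Sum>s=0..r. (-1) ^ s * gfact q (m - s) * qvandermonde_term q s r t' n')"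
    for t' n'
  have excess: "excess_formula q r t' l m = A t' n / gfact q (m - t')"
    "excess_formula q r t' (Suc l) m = A t' (Suc n) / gfact q (m - t')" for t'
    unfolding A_def n_def using excess_formula_qvandermonde assms by (simp_all add: Suc_diff_le)
  show ?thesis
  proof (cases t)
    case 0
    then show ?thesis
      unfolding excess A_def using q by (simp add: qvandermonde_term_zero_t)
  next
    case (Suc u)
    show ?thesis
    proof (cases "t \<le> m")
      case True
      have A: "A (Suc u) (Suc n) = q ^ Suc u * A (Suc u) n + q ^ u * A u n"
        unfolding A_def qvandermonde_term_Suc_Suc[OF q]
        by (simp add: algebra_simps sum.distrib sum_distrib_left)
      have g: "gfact q (m - u) = gfact q (m - Suc u) * (q ^ (m - u) - 1)"
        using True Suc gfact_Suc_diff[of u m q] by simp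
      have qm: "q ^ m - q ^ u = q ^ u * (q ^ (m - u) - 1)"
        using True Suc by (simp add: algebra_simps power_add[symmetric])
      have "0 < gfact q (m - Suc u)" "1 < q ^ (m - u)"
        using gfact_pos[OF q] one_less_power[OF q] True Suc by auto
      then show ?thesis
        unfolding Suc diff_Suc_1 excess A g qm by (simp add: field_simps)
    next
      case False
      then have "qvandermonde_term q s r t (Suc n) = 0" "qvandermonde_term q s r t n = 0"
        "qvandermonde_term q s r u n = 0" for s
        using assms Suc unfolding n_def by (auto intro!: qvandermonde_term_eq_0)
      then show ?thesis
        unfolding excess A_def using Suc by simp
    qed
  qed
qed

lemma excess_formula_diag:
  assumes q: "1 < q"
  shows "excess_formula q r t r m = (-1) ^ t * q ^ (t choose 2) * qbinom q r t"
proof -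
  have "excess_formula q r t r m
      = (\<Sum>s=0..r. if s = t then (-1) ^ t * q ^ (t choose 2) * qbinom q r t else 0)"
    unfolding excess_formula_def using q gfact_pos[OF q, of "m - t"]
    by (intro sum.cong) (auto simp: gbinom_def[of q 0])
  then show ?thesis
    by simp
qed

lemma excess_formula_Suc_Suc_diag:
  assumes q: "1 < q"
  shows "excess_formula q (Suc r) t (Suc r) (Suc m) = q ^ t * excess_formula q r t r m -
    (if t = 0 then 0 else q ^ (t - 1) * excess_formula q r (t - 1) r m)"
proof (cases t)
  case 0
  then show ?thesis
    unfolding excess_formula_diag[OF q] using q by simp
next
  case (Suc u)
  then show ?thesis
    unfolding excess_formula_diag[OF q] Suc qbinom_Suc_Suc[OF q] Suc_choose_two
    by (simp add: power_add algebra_simps)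
qed

text \<open>Induction on \<open>l - r\<close>, applying the row recursion on both sides.\<close>

lemma excess_formula_Suc_Suc:
  assumes q: "1 < q" and "r \<le> l" "l \<le> m"
  shows "excess_formula q (Suc r) t (Suc l) (Suc m) = q ^ t * excess_formula q r t l m -
    (if t = 0 then 0 else q ^ (t - 1) * excess_formula q r (t - 1) l m)"
proof -
  obtain d where "l = r + d"
    using assms le_Suc_ex by blast
  with assms(3) show ?thesis
  proof (induction d arbitrary: l t)
    case 0
    then show ?case
      using excess_formula_Suc_Suc_diag[OF q] by simp
  next
    case (Suc d)
    let ?l = "r + d"
    have l: "l = Suc ?l" and lm: "Suc ?l \<le> m"
      using Suc.prems by auto
    have IH: "excess_formula q (Suc r) t' (Suc ?l) (Suc m) = q ^ t' * excess_formula q r t' ?l m -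
        (if t' = 0 then 0 else q ^ (t' - 1) * excess_formula q r (t' - 1) ?l m)" for t'
      using Suc.IH[of ?l t'] lm by simp
    have row_Suc: "excess_formula q (Suc r) t' (Suc (Suc ?l)) (Suc m)
        = q ^ t' * excess_formula q (Suc r) t' (Suc ?l) (Suc m) + (if t' = 0 then 0
          else (q ^ Suc m - q ^ (t' - 1)) * excess_formula q (Suc r) (t' - 1) (Suc ?l) (Suc m))"
      for t'
      using excess_formula_Suc_row[OF q, of "Suc r" "Suc ?l" "Suc m" t'] lm by simp
    have row: "excess_formula q r t' (Suc ?l) m = q ^ t' * excess_formula q r t' ?l m +
        (if t' = 0 then 0 else (q ^ m - q ^ (t' - 1)) * excess_formula q r (t' - 1) ?l m)" for t'
      using excess_formula_Suc_row[OF q _ lm] by simp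
    consider "t = 0" | "t = 1" | u where "t = Suc (Suc u)"
      by (metis One_nat_def not0_implies_Suc)
    then show ?case
      unfolding l row_Suc row IH by cases (simp_all add: algebra_simps)
  qed
qed

lemma sum_gfact_diff_eq_mu_formula_minus_excess_formula:
  assumes q: "1 < q" and "1 \<le> r" "r \<le> l" "l \<le> m"
  shows "(\<Sum>s=1..r. q ^ (s choose 2)
      * (gfact q m / gfact q (m - t) - (-1) ^ s * gfact q (m - s) / gfact q (m - t))
      * q ^ (s * (l - r)) * q ^ ((t - s) choose 2)
      * qbinom q r s * gbinom q (int l - int r) (int t - int s))
    = mu_formula q t l m - excess_formula q r t l m"
  (is "(\<Sum>s=1..r. ?f s) = _")
proof -
  define c where "c = gfact q m / gfact q (m - t)"
  define e where "e s = (-1) ^ s * q ^ (s choose 2) * (gfact q (m - s) / gfact q (m - t))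
    * q ^ (s * (l - r)) * q ^ ((t - s) choose 2) * qbinom q r s
    * gbinom q (int l - int r) (int t - int s)" for s
  have f: "?f s = c * qvandermonde_term q s r t (l - r) - e s" for s
    unfolding qvandermonde_term_def c_def e_def using assms
    by (simp add: algebra_simps diff_divide_distrib)
  have "(\<Sum>s=1..r. ?f s) = (\<Sum>s=0..r. ?f s)"
    using assms by (simp add: sum.atLeast_Suc_atMost[of 0 r])
  also have "\<dots> = c * (\<Sum>s=0..r. qvandermonde_term q s r t (l - r)) - (\<Sum>s=0..r. e s)"
    unfolding f by (simp add: sum_subtractf sum_distrib_left)
  also have "\<dots> = mu_formula q t l m - excess_formula q r t l m"
    unfolding q_vandermonde[OF q] mu_formula_gfact[OF q assms(4)] excess_formula_def c_def e_def
    using assms by simp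
  finally show ?thesis .
qed

lemma mu_eq_mu_formula:
  "real (mu TYPE('a::{finite,field}) t l m) = mu_formula (real CARD('a)) t l m"
proof -
  have q: "1 < real CARD('a)"
    using one_less_card_field[where 'a = 'a] by simp
  show ?thesis
  proof (induction m arbitrary: t)
    case 0
    then show ?case
      using mu_formula_0[OF q] mu_0[where 'a = 'a] by simp
  next
    case (Suc m)
    then show ?case
      unfolding mu_Suc[where 'a = 'a] mu_formula_Suc[OF q] by simp
  qed
qed

lemma tau_excess_eq_excess_formula:
  assumes "r \<le> l" "l \<le> m"
  shows "tau_excess TYPE('a::{finite,field}) r t l m = excess_formula (real CARD('a)) r t l m"
  using assms
proof (induction r arbitrary: t l m)
  case 0
  have q: "1 < real CARD('a)"
    using one_less_card_field[where 'a = 'a] by simp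
  show ?case
    unfolding tau_excess_0 mu_eq_mu_formula excess_formula_0[OF q 0(2)] ..
next
  case (Suc r)
  have q: "1 < real CARD('a)"
    using one_less_card_field[where 'a = 'a] by simp
  obtain l' m' where l: "l = Suc l'" and m: "m = Suc m'" and h: "r \<le> l'" "l' \<le> m'"
    using Suc.prems by (cases l; cases m) auto
  show ?case
    unfolding l m tau_excess_Suc[OF h(1) order.trans[OF h]] Suc.IH[OF h]
      excess_formula_Suc_Suc[OF q h] ..
qed

theorem mainTheorem17:
  fixes r t l m :: nat
  defines "q \<equiv> real (card (UNIV :: 'a::{finite,field} set))"
  assumes "1 \<le> t" "t \<le> l" "l \<le> m" "1 \<le> r" "r \<le> l"
  shows "real (wcount TYPE('a) r t l m) =
      (q - 1) / q * (\<Sum>s=1..r. q ^ (s choose 2)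
         * (gfact q m / gfact q (m - t) - (-1) ^ s * gfact q (m - s) / gfact q (m - t))
         * q ^ (s * (l - r)) * q ^ ((t - s) choose 2)
         * gbinom q (int r) (int s) * gbinom q (int l - int r) (int t - int s))
    \<and> real (wcount TYPE('a) r t l m) =
      (q - 1) / q * (real (mu TYPE('a) t l m) - (\<Sum>s=0..r. (-1) ^ s * q ^ (s choose 2)
         * (gfact q (m - s) / gfact q (m - t))
         * q ^ (s * (l - r)) * q ^ ((t - s) choose 2)
         * gbinom q (int r) (int s) * gbinom q (int l - int r) (int t - int s)))"
proof -
  have q: "1 < q"
    unfolding q_def using one_less_card_field[where 'a = 'a] by simp
  have rl: "r \<le> l" and lm: "l \<le> m"
    using assms by auto
  have w: "real (wcount TYPE('a) r t l m)
      = (q - 1) / q * (mu_formula q t l m - excess_formula q r t l m)"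
    using wcount_eq_tau_excess[OF rl order.trans[OF rl lm], of t, where 'a = 'a]
    unfolding q_def mu_eq_mu_formula tau_excess_eq_excess_formula[OF rl lm] .
  show ?thesis
    unfolding w sum_gfact_diff_eq_mu_formula_minus_excess_formula[OF q \<open>1 \<le> r\<close> rl lm]
    unfolding q_def mu_eq_mu_formula excess_formula_def by simp
qed

end
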